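(* Let $(\mathcal{X},\mathcal{B},\lambda)$ be a measure space with $\lambda$ positive and $\sigma$-finite, and $P$ a probability measure on it with density $f\in\mathcal{L}^2(\mathcal{X},\lambda)$ with respect to $\lambda$. Let $X_1,\dots,X_N$ be i.i.d. with law $P$. Let $f_1,\dots,f_m\in\mathcal{L}^2$ with $D_k=\int f_k^2d\lambda>0$, and assume condition $\mathcal{H}(p)$ (see context) holds for some $p\in[1,+\infty]$. Then for every $\varepsilon>0$, $$P^{\otimes N}\left\{\forall k\in\{1,\dots,m\},\ f\in\mathcal{CR}_{k,\varepsilon}\right\}\ge 1-\varepsilon.$$
   Context: $d^2(g,h)=\int(g-h)^2d\lambda$ on $\mathcal{L}^2=\mathcal{L}^2(\mathcal{X},\lambda)$. $\hat\alpha_k=\frac{\frac1N\sum_{i=1}^Nf_k(X_i)}{D_k}$. $\mathcal{M}_k=\{\alpha f_k:\alpha\in\mathbb{R}\}$ and $\Pi_{\mathcal{M}_k}$ is the orthogonal projection onto $\mathcal{M}_k$ in $\mathcal{L}^2$. Condition $\mathcal{H}(p)$: for $1<p<\infty$ with $\frac1p+\frac1q=1$, there are known constants $c,c_1,\dots,c_m>0$ with $(\int|f_k|^{2p}d\lambda)^{1/p}\le c_k\int f_k^2d\lambda$ for all $k$ and $(\int|f|^qd\lambda)^{1/q}\le c$; for $p=1$: $f\le c$ everywhere and $c_k=1$; for $p=\infty$: $|f_k|\le\sqrt{c_kD_k}$ everywhere and $c=1$. $C_k=c_kc$. Define $$\beta(\varepsilon,k)=\frac{4\left[1+\log\frac{2m}{\varepsilon}\right]}{N}\left[\frac{\frac1N\sum_{i=1}^Nf_k(X_i)^2}{D_k}+C_k\right],\qquad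 \mathcal{CR}_{k,\varepsilon}=\left\{g\in\mathcal{L}^2: d^2(\hat\alpha_kf_k,\Pi_{\mathcal{M}_k}g)\le\beta(\varepsilon,k)\right\}.$$ *)

theory Defs
  imports "HOL-Probability.Probability"
begin

definition L2 :: "'a measure \<Rightarrow> ('a \<Rightarrow> real) set" where
  "L2 M = {g. g \<in> borel_measurable M \<and> integrable M (\<lambda>x. (g x)\<^sup>2)}"

definition dist2 :: "'a measure \<Rightarrow> ('a \<Rightarrow> real) \<Rightarrow> ('a \<Rightarrow> real) \<Rightarrow> real" where
  "dist2 M g h = (\<integral>x. (g x - h x)\<^sup>2 \<partial>M)"

definition Dnorm :: "'a measure \<Rightarrow> ('a \<Rightarrow> real) \<Rightarrow> real" where
  "Dnorm M fk = (\<integral>x. (fk x)\<^sup>2 \<partial>M)"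

definition span1 :: "('a \<Rightarrow> real) \<Rightarrow> ('a \<Rightarrow> real) set" where
  "span1 fk = {(\<lambda>x. \<alpha> * fk x) | \<alpha>. True}"

definition orth_proj :: "'a measure \<Rightarrow> ('a \<Rightarrow> real) set \<Rightarrow> ('a \<Rightarrow> real) \<Rightarrow> ('a \<Rightarrow> real)" where
  "orth_proj M S g = (THE h. h \<in> S \<and> (\<forall>u\<in>S. (\<integral>x. (g x - h x) * u x \<partial>M) = 0))"

definition alpha_hat :: "'a measure \<Rightarrow> nat \<Rightarrow> ('a \<Rightarrow> real) \<Rightarrow> (nat \<Rightarrow> 'a) \<Rightarrow> real" where
  "alpha_hat M N fk \<omega> = ((1 / real N) * (\<Sum>i\<in>{1..N}. fk (\<omega> i))) / Dnorm M fk"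

text \<open>beta(eps,k), with C_k = c_k * c.\<close>
definition beta :: "'a measure \<Rightarrow> nat \<Rightarrow> nat \<Rightarrow> ('a \<Rightarrow> real) \<Rightarrow> real \<Rightarrow> real \<Rightarrow> real
    \<Rightarrow> (nat \<Rightarrow> 'a) \<Rightarrow> real" where
  "beta M N m fk ck c \<epsilon> \<omega> =
     4 * (1 + ln (2 * real m / \<epsilon>)) / real N *
     (((1 / real N) * (\<Sum>i\<in>{1..N}. (fk (\<omega> i))\<^sup>2)) / Dnorm M fk + ck * c)"

definition CR :: "'a measure \<Rightarrow> nat \<Rightarrow> nat \<Rightarrow> ('a \<Rightarrow> real) \<Rightarrow> real \<Rightarrow> real \<Rightarrow> real
    \<Rightarrow> (nat \<Rightarrow> 'a) \<Rightarrow> ('a \<Rightarrow> real) set" where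
  "CR M N m fk ck c \<epsilon> \<omega> =
     {g \<in> L2 M. dist2 M (\<lambda>x. alpha_hat M N fk \<omega> * fk x) (orth_proj M (span1 fk) g)
                 \<le> beta M N m fk ck c \<epsilon> \<omega>}"

definition cond_H :: "'a measure \<Rightarrow> ('a \<Rightarrow> real) \<Rightarrow> nat \<Rightarrow> (nat \<Rightarrow> 'a \<Rightarrow> real) \<Rightarrow> ereal
    \<Rightarrow> real \<Rightarrow> (nat \<Rightarrow> real) \<Rightarrow> bool" where
  "cond_H M f m fs p c cs \<longleftrightarrow>
     1 \<le> p \<and> c > 0 \<and> (\<forall>k\<in>{1..m}. cs k > 0) \<and>
     (if p = 1 then (\<forall>x\<in>space M. f x \<le> c) \<and> (\<forall>k\<in>{1..m}. cs k = 1)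
      else if p = \<infinity> then
        (\<forall>k\<in>{1..m}. \<forall>x\<in>space M. \<bar>fs k x\<bar> \<le> sqrt (cs k * Dnorm M (fs k))) \<and> c = 1
      else (let p' = real_of_ereal p; q = p' / (p' - 1) in
        (\<forall>k\<in>{1..m}. integrable M (\<lambda>x. \<bar>fs k x\<bar> powr (2 * p')) \<and>
           (\<integral>x. \<bar>fs k x\<bar> powr (2 * p') \<partial>M) powr (1 / p') \<le> cs k * Dnorm M (fs k)) \<and>
        integrable M (\<lambda>x. \<bar>f x\<bar> powr q) \<and>
        (\<integral>x. \<bar>f x\<bar> powr q \<partial>M) powr (1 / q) \<le> c))"

end

theory Submission
  imports Defs
begin

text \<open>
  Let \<open>L = ln (2m/\<epsilon>)\<close>. Since the projection of \<open>f\<close> onto \<open>f\<^sub>k\<close> is \<open>(\<langle>f, f\<^sub>k\<rangle> / D\<^sub>k) f\<^sub>k\<close>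
  and \<open>\<langle>f, f\<^sub>k\<rangle> = E f\<^sub>k(X)\<close>, the event \<open>f \<in> CR\<^sub>k\<^sub>,\<^sub>\<epsilon>\<close> says exactly that the centred sum
  \<open>S = \<Sum>\<^sub>i (f\<^sub>k(X\<^sub>i) - E f\<^sub>k(X))\<close> satisfies \<open>S\<^sup>2 \<le> 4(1 + L)(Q + N C\<^sub>k D\<^sub>k)\<close>, where
  \<open>Q = \<Sum>\<^sub>i f\<^sub>k(X\<^sub>i)\<^sup>2\<close>. Condition \<open>H(p)\<close> gives \<open>E f\<^sub>k(X)\<^sup>2 \<le> C\<^sub>k D\<^sub>k\<close> by Hoelder's inequality.
  For any \<open>v \<ge> E f\<^sub>k(X)\<^sup>2\<close>, the elementary bound \<open>exp (x - x\<^sup>2/2) \<le> 1 + x + x\<^sup>2/2\<close> yields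
  \<open>E exp (t S - t\<^sup>2/2 (Q + N v)) \<le> 1\<close> for every real \<open>t\<close>; peeling over the levels
  \<open>4\<^sup>j N v \<le> Q + N v\<close>, with Markov's inequality for the top level, turns this into
  \<open>P (S\<^sup>2 > 4(1 + L)(Q + N v)) \<le> 2 e\<^sup>-\<^sup>L = \<epsilon>/m\<close>. A union bound over \<open>k\<close> finishes the proof.
\<close>

section \<open>Exponential moments of self-normalized sums\<close>

lemma exp_diff_half_square_le:
  fixes x :: real
  shows "exp (x - x\<^sup>2 / 2) \<le> 1 + x + x\<^sup>2 / 2"
proof -
  define g where "g y = (1 + y + y\<^sup>2 / 2) * exp (y\<^sup>2 / 2 - y)" for y :: real
  have g': "(g has_real_derivative exp (y\<^sup>2 / 2 - y) * (y * (1 + y / 2 + y\<^sup>2 / 2))) (at y)" for y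
    unfolding g_def by (auto intro!: derivative_eq_intros simp: field_simps power2_eq_square)
  have pos: "0 < 1 + y / 2 + y\<^sup>2 / 2" for y :: real
    using sum_power2_gt_zero_iff[of "y + 1/2" 1] by (simp add: power2_eq_square algebra_simps)
  have sign: "0 \<le> exp a * (y * (1 + y / 2 + y\<^sup>2 / 2)) \<longleftrightarrow> 0 \<le> y"
      "exp a * (y * (1 + y / 2 + y\<^sup>2 / 2)) \<le> 0 \<longleftrightarrow> y \<le> 0" for a y :: real
    using pos[of y] by (auto simp: zero_le_mult_iff mult_le_0_iff)
  have cont: "continuous_on A g" for A
    unfolding g_def by (intro continuous_intros) auto
  \<comment> \<open>\<open>g'\<close> has the sign of \<open>y\<close>, so \<open>g\<close> is minimal at \<open>0\<close>, where it equals \<open>1\<close>\<close>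
  have "g 0 \<le> g x"
  proof (cases "0 \<le> x")
    case True
    show ?thesis
      by (rule DERIV_nonneg_imp_increasing_open[OF True])
        (use g' sign cont in \<open>auto intro!: exI\<close>)
  next
    case False
    show ?thesis
      by (rule DERIV_nonpos_imp_decreasing_open[of x 0])
        (use False g' sign cont in \<open>auto intro!: exI\<close>)
  qed
  then have "exp (x - x\<^sup>2 / 2) \<le> g x * exp (x - x\<^sup>2 / 2)"
    by (simp add: g_def)
  also have "\<dots> = 1 + x + x\<^sup>2 / 2"
    by (simp add: g_def mult.assoc flip: exp_add)
  finally show ?thesis .
qed

lemma integrable_le_of_nn_integral_le:
  fixes u :: "'a \<Rightarrow> real"
  assumes [measurable]: "u \<in> borel_measurable M" and "\<And>x. x \<in> space M \<Longrightarrow> 0 \<le> u x"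
    and "(\<integral>\<^sup>+x. ennreal (u x) \<partial>M) \<le> ennreal v" and "0 \<le> v"
  shows "integrable M u" and "(\<integral>x. u x \<partial>M) \<le> v"
proof -
  show "integrable M u"
    using assms by (intro integrableI_nonneg AE_I2) (auto simp: top_unique intro: le_less_trans)
  then have "ennreal (\<integral>x. u x \<partial>M) \<le> ennreal v"
    using assms(2,3) by (subst nn_integral_eq_integral[symmetric]) auto
  then show "(\<integral>x. u x \<partial>M) \<le> v"
    using \<open>0 \<le> v\<close> by (simp add: ennreal_le_iff)
qed

lemma (in prob_space) nn_integral_exp_self_normalized_le_1:
  fixes Y :: "'a \<Rightarrow> real"
  assumes [measurable]: "Y \<in> borel_measurable M"
    and second_moment: "(\<integral>\<^sup>+x. ennreal ((Y x)\<^sup>2) \<partial>M) \<le> ennreal v" and "0 \<le> v"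
  shows "(\<integral>\<^sup>+x. ennreal (exp (t * (Y x - expectation Y) - t\<^sup>2 / 2 * ((Y x)\<^sup>2 + v))) \<partial>M) \<le> 1"
proof -
  define \<mu> where "\<mu> = expectation Y"
  define c where "c = exp (- t * \<mu> - t\<^sup>2 / 2 * v)"
  have int_Y2: "integrable M (\<lambda>x. (Y x)\<^sup>2)" and EY2: "expectation (\<lambda>x. (Y x)\<^sup>2) \<le> v"
    using integrable_le_of_nn_integral_le[OF _ _ second_moment \<open>0 \<le> v\<close>] by auto
  have int_Y: "integrable M Y"
    by (rule square_integrable_imp_integrable[OF _ int_Y2]) simp
  have nonneg: "0 \<le> 1 + z + z\<^sup>2 / 2" for z :: real
    using exp_diff_half_square_le[of z] exp_gt_zero[of "z - z\<^sup>2 / 2"] by linarith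
  have pointwise: "exp (t * (Y x - \<mu>) - t\<^sup>2 / 2 * ((Y x)\<^sup>2 + v)) \<le> (1 + t * Y x + (t * Y x)\<^sup>2 / 2) * c" for x
  proof -
    have "exp (t * (Y x - \<mu>) - t\<^sup>2 / 2 * ((Y x)\<^sup>2 + v)) = exp (t * Y x - (t * Y x)\<^sup>2 / 2) * c"
      by (simp add: c_def algebra_simps power_mult_distrib flip: exp_add)
    also have "\<dots> \<le> (1 + t * Y x + (t * Y x)\<^sup>2 / 2) * c"
      using exp_diff_half_square_le[of "t * Y x"] by (simp add: c_def)
    finally show ?thesis .
  qed
  have "expectation (\<lambda>x. (1 + t * Y x + (t * Y x)\<^sup>2 / 2) * c)
      = (1 + t * \<mu> + t\<^sup>2 / 2 * expectation (\<lambda>x. (Y x)\<^sup>2)) * c"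
    using int_Y int_Y2 by (simp add: \<mu>_def power_mult_distrib algebra_simps prob_space)
  also have "\<dots> \<le> (1 + t * \<mu> + t\<^sup>2 / 2 * v) * c"
    using EY2 by (intro mult_right_mono add_left_mono mult_left_mono) (auto simp: c_def)
  also have "\<dots> \<le> exp (t * \<mu> + t\<^sup>2 / 2 * v) * c"
    by (intro mult_right_mono exp_ge_add_one_self_aux) (auto simp: c_def add.assoc)
  also have "\<dots> = 1"
    by (simp add: c_def flip: exp_add)
  finally have bound: "expectation (\<lambda>x. (1 + t * Y x + (t * Y x)\<^sup>2 / 2) * c) \<le> 1" .
  have "(\<integral>\<^sup>+x. ennreal (exp (t * (Y x - \<mu>) - t\<^sup>2 / 2 * ((Y x)\<^sup>2 + v))) \<partial>M)
      \<le> (\<integral>\<^sup>+x. ennreal ((1 + t * Y x + (t * Y x)\<^sup>2 / 2) * c) \<partial>M)"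
    by (intro nn_integral_mono ennreal_leI pointwise)
  also have "\<dots> = ennreal (expectation (\<lambda>x. (1 + t * Y x + (t * Y x)\<^sup>2 / 2) * c))"
    using int_Y int_Y2
    by (intro nn_integral_eq_integral AE_I2 mult_nonneg_nonneg nonneg) (auto simp: c_def power_mult_distrib)
  also have "\<dots> \<le> 1"
    using bound by (simp add: ennreal_le_1)
  finally show ?thesis
    by (simp add: \<mu>_def)
qed

lemma (in prob_space) nn_integral_PiM_exp_self_normalized_le_1:
  fixes Y :: "'a \<Rightarrow> real"
  assumes [measurable]: "Y \<in> borel_measurable M"
    and "(\<integral>\<^sup>+x. ennreal ((Y x)\<^sup>2) \<partial>M) \<le> ennreal v" and "0 \<le> v" and "finite I"
  shows "(\<integral>\<^sup>+\<omega>. ennreal (exp (t * (\<Sum>i\<in>I. Y (\<omega> i) - expectation Y)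
            - t\<^sup>2 / 2 * ((\<Sum>i\<in>I. (Y (\<omega> i))\<^sup>2) + real (card I) * v))) \<partial>PiM I (\<lambda>_. M)) \<le> 1"
proof -
  interpret product_sigma_finite "\<lambda>_. M"
    by (simp add: product_sigma_finite_def sigma_finite_measure_axioms)
  define h where "h = (\<lambda>y. ennreal (exp (t * (Y y - expectation Y) - t\<^sup>2 / 2 * ((Y y)\<^sup>2 + v))))"
  have "exp (t * (\<Sum>i\<in>I. Y (\<omega> i) - expectation Y)
            - t\<^sup>2 / 2 * ((\<Sum>i\<in>I. (Y (\<omega> i))\<^sup>2) + real (card I) * v))
      = exp (\<Sum>i\<in>I. t * (Y (\<omega> i) - expectation Y) - t\<^sup>2 / 2 * ((Y (\<omega> i))\<^sup>2 + v))" for \<omega>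
    by (simp add: sum_subtractf sum_distrib_left sum.distrib algebra_simps flip: sum_divide_distrib)
  then have "(\<integral>\<^sup>+\<omega>. ennreal (exp (t * (\<Sum>i\<in>I. Y (\<omega> i) - expectation Y)
            - t\<^sup>2 / 2 * ((\<Sum>i\<in>I. (Y (\<omega> i))\<^sup>2) + real (card I) * v))) \<partial>PiM I (\<lambda>_. M))
      = (\<integral>\<^sup>+\<omega>. (\<Prod>i\<in>I. h (\<omega> i)) \<partial>PiM I (\<lambda>_. M))"
    using \<open>finite I\<close> by (simp add: h_def exp_sum prod_ennreal)
  also have "\<dots> = (\<Prod>i\<in>I. integral\<^sup>N M h)"
    by (rule product_nn_integral_prod[OF \<open>finite I\<close>]) (simp add: h_def)
  also have "\<dots> \<le> 1"
    using nn_integral_exp_self_normalized_le_1[OF assms(1-3)]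
    by (intro prod_le_1) (auto simp: h_def)
  finally show ?thesis .
qed

lemma (in prob_space) prob_ge_le_exp_neg:
  fixes Z :: "'a \<Rightarrow> real"
  assumes [measurable]: "Z \<in> borel_measurable M"
    and "(\<integral>\<^sup>+\<omega>. ennreal (exp (Z \<omega>)) \<partial>M) \<le> 1"
  shows "prob {\<omega>\<in>space M. a \<le> Z \<omega>} \<le> exp (- a)"
proof -
  have "emeasure M {\<omega>\<in>space M. a \<le> Z \<omega>}
      \<le> ennreal (exp (- a)) * (\<integral>\<^sup>+\<omega>. ennreal (exp (Z \<omega>)) * indicator (space M) \<omega> \<partial>M)"
    using Chernoff_ineq_nn_integral_ge[of 1 "space M" M Z a] by simp
  also have "\<dots> \<le> ennreal (exp (- a))"
    using assms(2) mult_left_mono[OF assms(2), of "ennreal (exp (- a))"]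
    by (simp add: nn_integral_cong[of M "\<lambda>\<omega>. ennreal (exp (Z \<omega>)) * indicator (space M) \<omega>"])
  finally show ?thesis
    by (simp add: emeasure_eq_measure)
qed

lemma (in prob_space) prob_ge_le_nn_integral_div:
  fixes Q :: "'a \<Rightarrow> real"
  assumes [measurable]: "Q \<in> borel_measurable M"
    and "(\<integral>\<^sup>+\<omega>. ennreal (Q \<omega>) \<partial>M) \<le> ennreal w" and "0 \<le> w" and "0 < a"
  shows "prob {\<omega>\<in>space M. a \<le> Q \<omega>} \<le> w / a"
proof -
  have "{\<omega>\<in>space M. a \<le> Q \<omega>} = {\<omega>\<in>space M. 1 \<le> ennreal (1 / a) * ennreal (Q \<omega>)}"
    using \<open>0 < a\<close> by (auto simp: ennreal_mult''[symmetric] ennreal_ge_1 field_simps)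
  then have "emeasure M {\<omega>\<in>space M. a \<le> Q \<omega>}
      \<le> ennreal (1 / a) * (\<integral>\<^sup>+\<omega>. ennreal (Q \<omega>) * indicator (space M) \<omega> \<partial>M)"
    using nn_integral_Markov_inequality[of "\<lambda>\<omega>. ennreal (Q \<omega>)" "space M" M "ennreal (1 / a)"]
    by simp
  also have "\<dots> \<le> ennreal (1 / a) * ennreal w"
    using assms(2) by (intro mult_left_mono) (auto simp: nn_integral_cong[of M "\<lambda>\<omega>. ennreal (Q \<omega>) * indicator (space M) \<omega>"])
  also have "\<dots> = ennreal (w / a)"
    using assms by (simp flip: ennreal_mult)
  finally show ?thesis
    using assms by (simp add: emeasure_eq_measure ennreal_le_iff)
qed

lemma nn_integral_PiM_component:
  assumes "\<And>i. i \<in> I \<Longrightarrow> prob_space (M i)" and "i \<in> I"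
    and [measurable]: "h \<in> borel_measurable (M i)"
  shows "(\<integral>\<^sup>+\<omega>. h (\<omega> i) \<partial>PiM I M) = integral\<^sup>N (M i) h"
  by (subst distr_PiM_component[OF assms(1,2), symmetric])
    (auto simp: nn_integral_distr measurable_component_singleton assms(2))

section \<open>Peeling\<close>

lemma ex_power_bracket:
  fixes b w W :: real
  assumes "w \<le> W" and "W < b ^ J * w"
  shows "\<exists>j<J. b ^ j * w \<le> W \<and> W \<le> b ^ Suc j * w"
  using assms(2)
proof (induction J)
  case 0
  then show ?case using assms(1) by simp
next
  case (Suc J)
  show ?case
  proof (cases "W < b ^ J * w")
    case True
    then show ?thesis using Suc.IH less_SucI by blast
  next
    case False
    then show ?thesis using Suc.prems by (intro exI[of _ J]) auto
  qed
qed

lemma peeling_level_ineq: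
  fixes K a W s :: real
  assumes "0 < K" and "0 < a" and "a \<le> W" and "W \<le> 4 * a" and "0 \<le> s" and "K * W \<le> s\<^sup>2"
  shows "4 * K / 9 \<le> (2/3 * sqrt (K / a)) * s - (2/3 * sqrt (K / a))\<^sup>2 / 2 * W"
proof -
  define u where "u = sqrt (K / a)"
  define \<sigma> where "\<sigma> = sqrt (W / a)"
  have u_sq: "u\<^sup>2 * a = K" and \<sigma>_sq: "\<sigma>\<^sup>2 * a = W"
    using assms by (simp_all add: u_def \<sigma>_def)
  have "1 \<le> \<sigma>"
    using assms by (simp add: \<sigma>_def)
  moreover have "\<sigma> \<le> sqrt 4"
    unfolding \<sigma>_def using assms by (intro real_sqrt_le_mono) (simp add: field_simps)
  ultimately have "0 \<le> (\<sigma> - 1) * (2 - \<sigma>)"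
    by (intro mult_nonneg_nonneg) auto
  then have "u\<^sup>2 * a * (4/9) \<le> u\<^sup>2 * a * (2/3 * \<sigma> - 2/9 * \<sigma>\<^sup>2)"
    using assms by (intro mult_left_mono) (auto simp: algebra_simps power2_eq_square)
  also have "\<dots> = 2/3 * u * (u * \<sigma> * a) - (2/3 * u)\<^sup>2 / 2 * W"
    using \<sigma>_sq by (simp add: algebra_simps power2_eq_square)
  also have "\<dots> \<le> 2/3 * u * s - (2/3 * u)\<^sup>2 / 2 * W"
  proof -
    have "(u * \<sigma> * a)\<^sup>2 \<le> s\<^sup>2"
      using u_sq \<sigma>_sq assms by (simp add: power_mult_distrib algebra_simps power2_eq_square)
    then have "u * \<sigma> * a \<le> s"
      using \<open>0 \<le> s\<close> by (rule power2_le_imp_le)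
    then have "2/3 * u * (u * \<sigma> * a) \<le> 2/3 * u * s"
      by (rule mult_left_mono) (use assms in \<open>simp add: u_def\<close>)
    then show ?thesis
      by linarith
  qed
  finally show ?thesis
    using u_sq by (simp add: u_def)
qed

lemma peeling_error_le:
  fixes L :: real
  assumes "0 \<le> L"
  defines "J \<equiv> nat \<lceil>L\<rceil> + 1"
  shows "1 / (4 ^ J - 1) + 2 * real J * exp (- (16 * (1 + L) / 9)) \<le> 2 * exp (- L)"
proof -
  define k where "k = nat \<lceil>L\<rceil>"
  have k: "L \<le> real k" "real k < L + 1" and J: "J = Suc k"
    using assms by (auto simp: k_def J_def) linarith+
  have "exp L \<le> exp 1 ^ k"
    using k by (simp flip: exp_of_nat_mult)
  also have "\<dots> \<le> 4 ^ k"
    by (intro power_mono) (use exp_le in auto)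
  also have "\<dots> \<le> 4 ^ J - 1"
    by (simp add: J) (use one_le_power[of "4::real" k] in linarith)
  finally have "1 / (4 ^ J - 1) \<le> 1 / exp L"
    by (intro divide_left_mono) (auto intro: mult_pos_pos order.strict_trans2[OF exp_gt_zero])
  then have first: "1 / (4 ^ J - 1) \<le> exp (- L)"
    by (simp add: exp_minus inverse_eq_divide)
  have "(13/9) ^ 4 \<le> exp (4/9::real) ^ 4"
    using exp_ge_add_one_self[of "4/9::real"] by (intro power_mono) auto
  moreover have "exp (4/9::real) ^ 4 = exp (16/9)"
    by (simp flip: exp_of_nat_mult)
  ultimately have e: "4 \<le> exp (16/9::real)"
    by (simp add: power_numeral_reduce)
  have "2 * real J \<le> 4 * (1 + 7 * L / 9)"
    using k \<open>0 \<le> L\<close> by (simp add: J)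
  also have "\<dots> \<le> exp (16/9) * exp (7 * L / 9)"
    using e exp_ge_add_one_self[of "7 * L / 9"] \<open>0 \<le> L\<close> by (intro mult_mono) auto
  also have "\<dots> = exp (- L) / exp (- (16 * (1 + L) / 9))"
    by (simp add: field_simps flip: exp_add exp_diff)
  finally have "2 * real J * exp (- (16 * (1 + L) / 9)) \<le> exp (- L)"
    by (simp add: field_simps)
  with first show ?thesis
    by simp
qed

lemma peeling_level_exists:
  fixes K w Q S :: real
  assumes "0 < K" and "0 < w" and "0 \<le> Q" and "K * (Q + w) < S\<^sup>2" and "Q < (4 ^ J - 1) * w"
  obtains s where "s \<in> (\<lambda>(j, \<sigma>). \<sigma> * (2/3 * sqrt (K / (4 ^ j * w)))) ` ({..<J} \<times> {-1, 1})"
    and "4 * K / 9 \<le> s * S - s\<^sup>2 / 2 * (Q + w)"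
proof -
  obtain j where "j < J" and j: "4 ^ j * w \<le> Q + w" "Q + w \<le> 4 ^ Suc j * w"
    using ex_power_bracket[of w "Q + w" 4 J] assms by (auto simp: algebra_simps)
  define t where "t = 2/3 * sqrt (K / (4 ^ j * w))"
  define \<sigma> :: real where "\<sigma> = (if 0 \<le> S then 1 else -1)"
  have \<sigma>: "\<sigma> \<in> {-1, 1}" "\<sigma> * S = \<bar>S\<bar>" "\<sigma>\<^sup>2 = 1"
    by (auto simp: \<sigma>_def)
  have "4 * K / 9 \<le> t * \<bar>S\<bar> - t\<^sup>2 / 2 * (Q + w)"
    unfolding t_def using j assms by (intro peeling_level_ineq) auto
  also have "t * \<bar>S\<bar> - t\<^sup>2 / 2 * (Q + w) = (\<sigma> * t) * S - (\<sigma> * t)\<^sup>2 / 2 * (Q + w)"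
    by (simp only: power_mult_distrib \<sigma>(3) flip: \<sigma>(2)) (simp add: ac_simps)
  finally have "4 * K / 9 \<le> (\<sigma> * t) * S - (\<sigma> * t)\<^sup>2 / 2 * (Q + w)" .
  moreover have "\<sigma> * t \<in> (\<lambda>(j, \<sigma>). \<sigma> * (2/3 * sqrt (K / (4 ^ j * w)))) ` ({..<J} \<times> {-1, 1})"
    unfolding t_def using \<open>j < J\<close> \<sigma>(1) by (intro image_eqI[of _ _ "(j, \<sigma>)"]) auto
  ultimately show ?thesis
    using that by blast
qed

lemma (in prob_space) prob_self_normalized_peeling:
  fixes S Q :: "'a \<Rightarrow> real" and w K :: real
  assumes [measurable]: "S \<in> borel_measurable M" "Q \<in> borel_measurable M"
    and Q_nonneg: "\<And>\<omega>. \<omega> \<in> space M \<Longrightarrow> 0 \<le> Q \<omega>"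
    and exp_moment: "\<And>s. (\<integral>\<^sup>+\<omega>. ennreal (exp (s * S \<omega> - s\<^sup>2 / 2 * (Q \<omega> + w))) \<partial>M) \<le> 1"
    and Q_moment: "(\<integral>\<^sup>+\<omega>. ennreal (Q \<omega>) \<partial>M) \<le> ennreal w"
    and "0 < w" and "0 < K" and "0 < J"
  shows "prob {\<omega>\<in>space M. K * (Q \<omega> + w) < (S \<omega>)\<^sup>2} \<le> 1 / (4 ^ J - 1) + 2 * real J * exp (- (4 * K / 9))"
proof -
  define E where "E s = {\<omega>\<in>space M. 4 * K / 9 \<le> s * S \<omega> - s\<^sup>2 / 2 * (Q \<omega> + w)}" for s
  define T where "T = {\<omega>\<in>space M. (4 ^ J - 1) * w \<le> Q \<omega>}"
  define ts where "ts = (\<lambda>(j, \<sigma>). \<sigma> * (2/3 * sqrt (K / (4 ^ j * w)))) ` ({..<J} \<times> {-1, 1})"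
  have "finite ts"
    by (simp add: ts_def)
  have "card ts \<le> card ({..<J} \<times> {-1, 1::real})"
    unfolding ts_def by (rule card_image_le) simp
  then have card_ts: "card ts \<le> 2 * J"
    by (simp add: card_cartesian_product)
  have [measurable]: "E s \<in> events" "T \<in> events" for s
    unfolding E_def T_def by measurable
  have "{\<omega>\<in>space M. K * (Q \<omega> + w) < (S \<omega>)\<^sup>2} \<subseteq> T \<union> (\<Union>s\<in>ts. E s)"
  proof
    fix \<omega> assume \<omega>: "\<omega> \<in> {\<omega>\<in>space M. K * (Q \<omega> + w) < (S \<omega>)\<^sup>2}"
    show "\<omega> \<in> T \<union> (\<Union>s\<in>ts. E s)"
    proof (cases "\<omega> \<in> T")
      case False
      then obtain s where "s \<in> ts" and "4 * K / 9 \<le> s * S \<omega> - s\<^sup>2 / 2 * (Q \<omega> + w)"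
        using \<omega> Q_nonneg \<open>0 < K\<close> \<open>0 < w\<close> peeling_level_exists[of K w "Q \<omega>" "S \<omega>" J]
        unfolding T_def ts_def by (auto simp: not_le)
      then show ?thesis
        using \<omega> by (auto simp: E_def)
    qed simp
  qed
  then have "prob {\<omega>\<in>space M. K * (Q \<omega> + w) < (S \<omega>)\<^sup>2} \<le> prob (T \<union> (\<Union>s\<in>ts. E s))"
    using \<open>finite ts\<close> by (intro finite_measure_mono sets.Un sets.finite_UN) auto
  moreover have "prob (T \<union> (\<Union>s\<in>ts. E s)) \<le> prob T + prob (\<Union>s\<in>ts. E s)"
    using \<open>finite ts\<close> by (intro measure_Un_le sets.finite_UN) auto
  moreover have "prob T \<le> w / ((4 ^ J - 1) * w)"
    unfolding T_def using Q_moment \<open>0 < w\<close> \<open>0 < J\<close>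
    by (intro prob_ge_le_nn_integral_div) (auto simp: one_less_power)
  moreover have "prob (\<Union>s\<in>ts. E s) \<le> (\<Sum>s\<in>ts. prob (E s))"
    using \<open>finite ts\<close> by (rule measure_UNION_le) auto
  moreover have "(\<Sum>s\<in>ts. prob (E s)) \<le> real (card ts) * exp (- (4 * K / 9))"
    unfolding E_def using exp_moment by (intro sum_bounded_above prob_ge_le_exp_neg) auto
  moreover have "real (card ts) * exp (- (4 * K / 9)) \<le> 2 * real J * exp (- (4 * K / 9))"
    using card_ts by (intro mult_right_mono) auto
  moreover have "w / ((4 ^ J - 1) * w) = 1 / (4 ^ J - 1)"
    using \<open>0 < w\<close> by simp
  ultimately show ?thesis
    by linarith
qed

lemma (in prob_space) prob_self_normalized_deviation:
  fixes S Q :: "'a \<Rightarrow> real" and w L :: real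
  assumes "S \<in> borel_measurable M" "Q \<in> borel_measurable M"
    and "\<And>\<omega>. \<omega> \<in> space M \<Longrightarrow> 0 \<le> Q \<omega>"
    and "\<And>s. (\<integral>\<^sup>+\<omega>. ennreal (exp (s * S \<omega> - s\<^sup>2 / 2 * (Q \<omega> + w))) \<partial>M) \<le> 1"
    and "(\<integral>\<^sup>+\<omega>. ennreal (Q \<omega>) \<partial>M) \<le> ennreal w"
    and "0 < w" and "0 \<le> L"
  shows "prob {\<omega>\<in>space M. 4 * (1 + L) * (Q \<omega> + w) < (S \<omega>)\<^sup>2} \<le> 2 * exp (- L)"
proof -
  have "prob {\<omega>\<in>space M. 4 * (1 + L) * (Q \<omega> + w) < (S \<omega>)\<^sup>2}
      \<le> 1 / (4 ^ (nat \<lceil>L\<rceil> + 1) - 1) + 2 * real (nat \<lceil>L\<rceil> + 1) * exp (- (4 * (4 * (1 + L)) / 9))"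
    by (rule prob_self_normalized_peeling[OF assms(1-6)]) (use \<open>0 \<le> L\<close> in auto)
  also have "\<dots> \<le> 2 * exp (- L)"
    using peeling_error_le[OF \<open>0 \<le> L\<close>] by simp
  finally show ?thesis .
qed

lemma (in prob_space) prob_iid_self_normalized_deviation:
  fixes Y :: "'a \<Rightarrow> real" and I :: "'i set" and v L :: real
  assumes [measurable]: "Y \<in> borel_measurable M"
    and second_moment: "(\<integral>\<^sup>+x. ennreal ((Y x)\<^sup>2) \<partial>M) \<le> ennreal v"
    and "0 < v" and "finite I" and "I \<noteq> {}" and "0 \<le> L"
  shows "measure (PiM I (\<lambda>_. M))
     {\<omega>\<in>space (PiM I (\<lambda>_. M)). 4 * (1 + L) * ((\<Sum>i\<in>I. (Y (\<omega> i))\<^sup>2) + real (card I) * v)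
         < (\<Sum>i\<in>I. Y (\<omega> i) - expectation Y)\<^sup>2} \<le> 2 * exp (- L)"
proof -
  interpret Pi: prob_space "PiM I (\<lambda>_. M)"
    by (rule prob_space_PiM) (simp add: prob_space_axioms)
  have "(\<integral>\<^sup>+\<omega>. ennreal (\<Sum>i\<in>I. (Y (\<omega> i))\<^sup>2) \<partial>PiM I (\<lambda>_. M))
      = (\<integral>\<^sup>+\<omega>. (\<Sum>i\<in>I. ennreal ((Y (\<omega> i))\<^sup>2)) \<partial>PiM I (\<lambda>_. M))"
    by (simp add: sum_ennreal)
  also have "\<dots> = (\<Sum>i\<in>I. \<integral>\<^sup>+\<omega>. ennreal ((Y (\<omega> i))\<^sup>2) \<partial>PiM I (\<lambda>_. M))"
    by (rule nn_integral_sum) measurable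
  also have "\<dots> = (\<Sum>i\<in>I. \<integral>\<^sup>+x. ennreal ((Y x)\<^sup>2) \<partial>M)"
    by (intro sum.cong refl nn_integral_PiM_component) (auto simp: prob_space_axioms)
  also have "\<dots> \<le> ennreal (real (card I) * v)"
    using sum_mono[of I "\<lambda>_. \<integral>\<^sup>+x. ennreal ((Y x)\<^sup>2) \<partial>M" "\<lambda>_. ennreal v"] second_moment \<open>0 < v\<close>
    by (simp add: ennreal_of_nat_eq_real_of_nat ennreal_mult')
  finally have Q_moment: "(\<integral>\<^sup>+\<omega>. ennreal (\<Sum>i\<in>I. (Y (\<omega> i))\<^sup>2) \<partial>PiM I (\<lambda>_. M))
      \<le> ennreal (real (card I) * v)" .
  show ?thesis
  proof (rule Pi.prob_self_normalized_deviation[OF _ _ _ _ Q_moment])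
    show "(\<integral>\<^sup>+\<omega>. ennreal (exp (s * (\<Sum>i\<in>I. Y (\<omega> i) - expectation Y)
        - s\<^sup>2 / 2 * ((\<Sum>i\<in>I. (Y (\<omega> i))\<^sup>2) + real (card I) * v))) \<partial>PiM I (\<lambda>_. M)) \<le> 1" for s
      using second_moment \<open>0 < v\<close> \<open>finite I\<close> by (intro nn_integral_PiM_exp_self_normalized_le_1) auto
    show "0 < real (card I) * v"
      using \<open>finite I\<close> \<open>I \<noteq> {}\<close> \<open>0 < v\<close> by (simp add: card_gt_0_iff)
  qed (auto simp: sum_nonneg \<open>0 \<le> L\<close>)
qed

section \<open>The confidence regions\<close>

lemma integrable_mult_L2:
  assumes "g \<in> L2 M" and "h \<in> L2 M"
  shows "integrable M (\<lambda>x. h x * g x)"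
proof (rule Bochner_Integration.integrable_bound)
  show "integrable M (\<lambda>x. (h x)\<^sup>2 + (g x)\<^sup>2)"
    using assms by (auto simp: L2_def)
  show "(\<lambda>x. h x * g x) \<in> borel_measurable M"
    using assms by (auto simp: L2_def)
  have "\<bar>h x\<bar> * \<bar>g x\<bar> \<le> (h x)\<^sup>2 + (g x)\<^sup>2" for x
  proof -
    have "2 * (\<bar>h x\<bar> * \<bar>g x\<bar>) \<le> (h x)\<^sup>2 + (g x)\<^sup>2"
      using sum_squares_bound[of "\<bar>h x\<bar>" "\<bar>g x\<bar>"] by (simp add: mult.assoc)
    moreover have "0 \<le> \<bar>h x\<bar> * \<bar>g x\<bar>"
      by simp
    ultimately show ?thesis
      by linarith
  qed
  then show "AE x in M. norm (h x * g x) \<le> norm ((h x)\<^sup>2 + (g x)\<^sup>2)"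
    by (simp add: abs_mult)
qed

lemma orth_proj_span1:
  assumes "g \<in> L2 M" and "h \<in> L2 M" and "Dnorm M g > 0"
  shows "orth_proj M (span1 g) h = (\<lambda>x. ((\<integral>y. h y * g y \<partial>M) / Dnorm M g) * g x)"
proof -
  define \<alpha> where "\<alpha> = (\<integral>y. h y * g y \<partial>M) / Dnorm M g"
  have inner: "(\<integral>x. (h x - a * g x) * (b * g x) \<partial>M) = b * ((\<integral>x. h x * g x \<partial>M) - a * Dnorm M g)" for a b
  proof -
    have "(\<lambda>x. (h x - a * g x) * (b * g x)) = (\<lambda>x. b * (h x * g x) - (a * b) * (g x)\<^sup>2)"
      by (auto simp: algebra_simps power2_eq_square)
    then show ?thesis
      using integrable_mult_L2[OF assms(1,2)] assms(1)
      by (simp add: Dnorm_def L2_def algebra_simps)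
  qed
  have "g \<in> span1 g"
    unfolding span1_def by (auto intro!: exI[of _ 1])
  have orth_iff: "(\<forall>u\<in>span1 g. (\<integral>x. (h x - a * g x) * u x \<partial>M) = 0) \<longleftrightarrow> a = \<alpha>" for a
  proof
    assume "\<forall>u\<in>span1 g. (\<integral>x. (h x - a * g x) * u x \<partial>M) = 0"
    then have "(\<integral>x. (h x - a * g x) * (1 * g x) \<partial>M) = 0"
      using \<open>g \<in> span1 g\<close> by simp
    then show "a = \<alpha>"
      using assms(3) unfolding inner by (simp add: \<alpha>_def field_simps)
  next
    assume "a = \<alpha>"
    then have "a * Dnorm M g = (\<integral>x. h x * g x \<partial>M)"
      using assms(3) by (simp add: \<alpha>_def)
    then show "\<forall>u\<in>span1 g. (\<integral>x. (h x - a * g x) * u x \<partial>M) = 0"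
      by (auto simp: span1_def inner)
  qed
  show ?thesis
    unfolding orth_proj_def \<alpha>_def[symmetric]
  proof (rule the_equality)
    show "(\<lambda>x. \<alpha> * g x) \<in> span1 g \<and> (\<forall>u\<in>span1 g. (\<integral>x. (h x - \<alpha> * g x) * u x \<partial>M) = 0)"
      using orth_iff by (auto simp: span1_def)
  next
    fix k assume "k \<in> span1 g \<and> (\<forall>u\<in>span1 g. (\<integral>x. (h x - k x) * u x \<partial>M) = 0)"
    then show "k = (\<lambda>x. \<alpha> * g x)"
      using orth_iff by (auto simp: span1_def)
  qed
qed

lemma dist2_scaled:
  "dist2 M (\<lambda>x. a * g x) (\<lambda>x. b * g x) = (a - b)\<^sup>2 * Dnorm M g"
proof -
  have "(\<lambda>x. (a * g x - b * g x)\<^sup>2) = (\<lambda>x. (a - b)\<^sup>2 * (g x)\<^sup>2)"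
    by (auto simp: algebra_simps power2_eq_square)
  then show ?thesis
    by (simp add: dist2_def Dnorm_def)
qed

lemma mem_CR_iff:
  assumes "f \<in> L2 M" and "g \<in> L2 M" and "Dnorm M g > 0" and "N \<ge> 1"
  shows "f \<in> CR M N m g ck c \<epsilon> \<omega> \<longleftrightarrow>
    (\<Sum>i\<in>{1..N}. g (\<omega> i) - (\<integral>x. f x * g x \<partial>M))\<^sup>2
      \<le> 4 * (1 + ln (2 * real m / \<epsilon>)) * ((\<Sum>i\<in>{1..N}. (g (\<omega> i))\<^sup>2) + real N * (ck * c * Dnorm M g))"
proof -
  define D where "D = Dnorm M g"
  define \<mu> where "\<mu> = (\<integral>x. f x * g x \<partial>M)"
  define K where "K = 4 * (1 + ln (2 * real m / \<epsilon>))"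
  define A where "A = (\<Sum>i\<in>{1..N}. g (\<omega> i))"
  define B where "B = (\<Sum>i\<in>{1..N}. (g (\<omega> i))\<^sup>2)"
  have D: "0 < D" and n: "0 < real N"
    using assms by (simp_all add: D_def)
  have proj: "orth_proj M (span1 g) f = (\<lambda>x. (\<mu> / D) * g x)"
    unfolding \<mu>_def D_def by (rule orth_proj_span1[OF assms(2,1,3)])
  have "f \<in> CR M N m g ck c \<epsilon> \<omega> \<longleftrightarrow>
      dist2 M (\<lambda>x. alpha_hat M N g \<omega> * g x) (orth_proj M (span1 g) f) \<le> beta M N m g ck c \<epsilon> \<omega>"
    using assms(1) by (simp add: CR_def)
  also have "\<dots> \<longleftrightarrow> (alpha_hat M N g \<omega> - \<mu> / D)\<^sup>2 * D \<le> beta M N m g ck c \<epsilon> \<omega>"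
    by (simp only: proj dist2_scaled D_def)
  also have "\<dots> \<longleftrightarrow> (A - N * \<mu>)\<^sup>2 / (N\<^sup>2 * D) \<le> K * (B + N * (ck * c * D)) / (N\<^sup>2 * D)"
  proof -
    have "(alpha_hat M N g \<omega> - \<mu> / D)\<^sup>2 * D = (A - N * \<mu>)\<^sup>2 / (N\<^sup>2 * D)"
      using D n by (simp add: alpha_hat_def A_def D_def[symmetric] field_simps power2_eq_square)
    moreover have "beta M N m g ck c \<epsilon> \<omega> = K * (B + N * (ck * c * D)) / (N\<^sup>2 * D)"
      using D n by (simp add: beta_def K_def B_def D_def[symmetric] field_simps power2_eq_square)
    ultimately show ?thesis
      by simp
  qed
  also have "\<dots> \<longleftrightarrow> (A - N * \<mu>)\<^sup>2 \<le> K * (B + N * (ck * c * D))"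
    using mult_pos_pos[OF zero_less_power[OF n] D, of 2] by (auto simp: divide_le_cancel)
  finally show ?thesis
    by (simp add: A_def B_def K_def D_def \<mu>_def sum_subtractf)
qed

section \<open>Second moments under condition H(p)\<close>

lemma le_powr_of_powr_inverse_le:
  fixes I C r :: real
  assumes "0 \<le> I" and "0 < r" and "I powr (1 / r) \<le> C"
  shows "I \<le> C powr r"
proof -
  have "I = (I powr (1 / r)) powr r"
    using assms by (simp add: powr_powr)
  also have "\<dots> \<le> C powr r"
    using assms by (intro powr_mono2) auto
  finally show ?thesis .
qed

lemma nn_integral_mult_le_Holder:
  fixes u w :: "'a \<Rightarrow> real" and p q A B :: real
  assumes "1 < p" and "1 < q" and "1 / p + 1 / q = 1"
    and u_nonneg: "\<And>x. x \<in> space M \<Longrightarrow> 0 \<le> u x" and w_nonneg: "\<And>x. x \<in> space M \<Longrightarrow> 0 \<le> w x"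
    and int_u: "integrable M (\<lambda>x. u x powr p)" and int_w: "integrable M (\<lambda>x. w x powr q)"
    and u_norm: "(\<integral>x. u x powr p \<partial>M) powr (1 / p) \<le> A"
    and w_norm: "(\<integral>x. w x powr q \<partial>M) powr (1 / q) \<le> B"
    and "0 < A" and "0 < B"
  shows "(\<integral>\<^sup>+x. ennreal (u x * w x) \<partial>M) \<le> ennreal (A * B)"
proof -
  have u_int_le: "(\<integral>x. u x powr p \<partial>M) \<le> A powr p"
    using u_norm \<open>1 < p\<close> by (intro le_powr_of_powr_inverse_le integral_nonneg_AE) auto
  have w_int_le: "(\<integral>x. w x powr q \<partial>M) \<le> B powr q"
    using w_norm \<open>1 < q\<close> by (intro le_powr_of_powr_inverse_le integral_nonneg_AE) auto
  define F where "F x = A * B * ((u x / A) powr p / p + (w x / B) powr q / q)" for x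
  have F_eq: "F x = A * B * (u x powr p / (p * A powr p) + w x powr q / (q * B powr q))"
    if "x \<in> space M" for x
    using u_nonneg[OF that] w_nonneg[OF that] \<open>0 < A\<close> \<open>0 < B\<close>
    by (simp add: F_def powr_divide mult.commute)
  have int_F: "integrable M F"
    using int_u int_w by (simp add: Bochner_Integration.integrable_cong[OF refl F_eq])
  have Young: "u x * w x \<le> F x" if "x \<in> space M" for x
  proof -
    have "u x / A * (w x / B) \<le> (u x / A) powr p / p + (w x / B) powr q / q"
      using u_nonneg[OF that] w_nonneg[OF that] assms by (intro Youngs_inequality) auto
    then show ?thesis
      using \<open>0 < A\<close> \<open>0 < B\<close> by (simp add: F_def field_simps)
  qed
  have "(\<integral>x. F x \<partial>M)
      = A * B * ((\<integral>x. u x powr p \<partial>M) / (p * A powr p) + (\<integral>x. w x powr q \<partial>M) / (q * B powr q))"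
    using int_u int_w by (simp add: Bochner_Integration.integral_cong[OF refl F_eq])
  also have "\<dots> \<le> A * B * (A powr p / (p * A powr p) + B powr q / (q * B powr q))"
    using u_int_le w_int_le assms by (intro mult_left_mono add_mono divide_right_mono) auto
  also have "\<dots> = A * B"
    using assms by simp
  finally have F_bound: "(\<integral>x. F x \<partial>M) \<le> A * B" .
  have "(\<integral>\<^sup>+x. ennreal (u x * w x) \<partial>M) \<le> (\<integral>\<^sup>+x. ennreal (F x) \<partial>M)"
    using Young by (intro nn_integral_mono ennreal_leI)
  also have "\<dots> = ennreal (\<integral>x. F x \<partial>M)"
    using \<open>0 < A\<close> \<open>0 < B\<close> \<open>1 < p\<close> \<open>1 < q\<close>
    by (intro nn_integral_eq_integral[OF int_F] AE_I2) (simp add: F_def)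
  also have "\<dots> \<le> ennreal (A * B)"
    using F_bound by (rule ennreal_leI)
  finally show ?thesis .
qed

lemma nn_integral_mult_le_bounded_weight:
  fixes u w :: "'a \<Rightarrow> real"
  assumes "\<And>x. x \<in> space M \<Longrightarrow> w x \<le> c" and "\<And>x. x \<in> space M \<Longrightarrow> 0 \<le> u x"
    and "integrable M u" and "0 \<le> c"
  shows "(\<integral>\<^sup>+x. ennreal (w x * u x) \<partial>M) \<le> ennreal (c * (\<integral>x. u x \<partial>M))"
proof -
  have "(\<integral>\<^sup>+x. ennreal (w x * u x) \<partial>M) \<le> (\<integral>\<^sup>+x. ennreal (c * u x) \<partial>M)"
    using assms(1,2) by (intro nn_integral_mono ennreal_leI mult_right_mono) auto
  also have "\<dots> = ennreal (c * (\<integral>x. u x \<partial>M))"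
    using assms(2-4) by (subst nn_integral_eq_integral) auto
  finally show ?thesis .
qed

lemma nn_integral_mult_le_bounded_factor:
  fixes u w :: "'a \<Rightarrow> real"
  assumes [measurable]: "w \<in> borel_measurable M" and "\<And>x. x \<in> space M \<Longrightarrow> 0 \<le> w x" and "\<And>x. x \<in> space M \<Longrightarrow> u x \<le> A"
    and "(\<integral>\<^sup>+x. ennreal (w x) \<partial>M) \<le> 1" and "0 \<le> A"
  shows "(\<integral>\<^sup>+x. ennreal (w x * u x) \<partial>M) \<le> ennreal A"
proof -
  have "ennreal (w x * u x) \<le> ennreal (w x) * ennreal A" if "x \<in> space M" for x
    using assms(2,3)[OF that] \<open>0 \<le> A\<close>
    by (subst ennreal_mult[symmetric]) (auto intro: ennreal_leI mult_left_mono)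
  then have "(\<integral>\<^sup>+x. ennreal (w x * u x) \<partial>M) \<le> (\<integral>\<^sup>+x. ennreal (w x) * ennreal A \<partial>M)"
    by (rule nn_integral_mono)
  also have "\<dots> = (\<integral>\<^sup>+x. ennreal (w x) \<partial>M) * ennreal A"
    by (rule nn_integral_multc) simp
  also have "\<dots> \<le> ennreal A"
    using mult_right_mono[OF assms(4), of "ennreal A"] by simp
  finally show ?thesis .
qed

lemma nn_integral_mult_square_le_Holder:
  fixes g w :: "'a \<Rightarrow> real" and p A B :: real
  assumes "1 < p" and w_nonneg: "\<And>x. x \<in> space M \<Longrightarrow> 0 \<le> w x"
    and "integrable M (\<lambda>x. \<bar>g x\<bar> powr (2 * p))" and "(\<integral>x. \<bar>g x\<bar> powr (2 * p) \<partial>M) powr (1 / p) \<le> A"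
    and "integrable M (\<lambda>x. \<bar>w x\<bar> powr (p / (p - 1)))"
    and "(\<integral>x. \<bar>w x\<bar> powr (p / (p - 1)) \<partial>M) powr (1 / (p / (p - 1))) \<le> B"
    and "0 < A" and "0 < B"
  shows "(\<integral>\<^sup>+x. ennreal (w x * (g x)\<^sup>2) \<partial>M) \<le> ennreal (A * B)"
proof -
  define q where "q = p / (p - 1)"
  have square_powr: "((g x)\<^sup>2) powr p = \<bar>g x\<bar> powr (2 * p)" for x
  proof -
    have "(g x)\<^sup>2 = \<bar>g x\<bar> powr 2"
      by simp
    then show ?thesis
      by (simp only: powr_powr)
  qed
  have abs_w: "\<bar>w x\<bar> powr q = w x powr q" if "x \<in> space M" for x
    using w_nonneg[OF that] by simp
  have "(\<integral>\<^sup>+x. ennreal ((g x)\<^sup>2 * w x) \<partial>M) \<le> ennreal (A * B)"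
  proof (rule nn_integral_mult_le_Holder[where q = q])
    show "1 < q" and "1 / p + 1 / q = 1"
      using \<open>1 < p\<close> by (simp_all add: q_def field_simps)
    show "integrable M (\<lambda>x. ((g x)\<^sup>2) powr p)" "(\<integral>x. ((g x)\<^sup>2) powr p \<partial>M) powr (1 / p) \<le> A"
      using assms(3,4) by (simp_all add: square_powr)
    show "integrable M (\<lambda>x. w x powr q)" "(\<integral>x. w x powr q \<partial>M) powr (1 / q) \<le> B"
      using assms(5,6) unfolding q_def[symmetric]
      by (simp_all add: Bochner_Integration.integrable_cong[OF refl abs_w]
          Bochner_Integration.integral_cong[OF refl abs_w])
  qed (use assms in auto)
  then show ?thesis
    by (simp add: ac_simps)
qed

lemma nn_integral_density_square_le:
  assumes [measurable]: "f \<in> borel_measurable M" and f_nonneg: "\<And>x. x \<in> space M \<Longrightarrow> f x \<ge> 0"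
    and "prob_space (density M (\<lambda>x. ennreal (f x)))"
    and H: "cond_H M f m fs p c cs" and "k \<in> {1..m}"
    and "fs k \<in> L2 M" and "Dnorm M (fs k) > 0"
  shows "(\<integral>\<^sup>+x. ennreal ((fs k x)\<^sup>2) \<partial>density M (\<lambda>x. ennreal (f x)))
    \<le> ennreal (cs k * c * Dnorm M (fs k))"
proof -
  define g where "g = fs k"
  define D where "D = Dnorm M g"
  have [measurable]: "g \<in> borel_measurable M" and int_g2: "integrable M (\<lambda>x. (g x)\<^sup>2)"
    using \<open>fs k \<in> L2 M\<close> by (simp_all add: L2_def g_def)
  have "0 < D"
    using \<open>Dnorm M (fs k) > 0\<close> by (simp add: D_def g_def)
  have "0 < c" and "0 < cs k"
    using H \<open>k \<in> {1..m}\<close> by (auto simp: cond_H_def)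
  have "(\<integral>\<^sup>+x. ennreal ((g x)\<^sup>2) \<partial>density M (\<lambda>x. ennreal (f x))) = (\<integral>\<^sup>+x. ennreal (f x * (g x)\<^sup>2) \<partial>M)"
    by (subst nn_integral_density) (auto intro!: nn_integral_cong simp: ennreal_mult f_nonneg)
  also have "\<dots> \<le> ennreal (cs k * c * D)"
  proof (cases "p = 1")
    case True
    then have "\<And>x. x \<in> space M \<Longrightarrow> f x \<le> c" and "cs k = 1"
      using H \<open>k \<in> {1..m}\<close> by (auto simp: cond_H_def)
    then show ?thesis
      using nn_integral_mult_le_bounded_weight[where w = f and u = "\<lambda>x. (g x)\<^sup>2"] int_g2 \<open>0 < c\<close>
      by (simp add: D_def Dnorm_def)
  next
    case p_ne_1: False
    show ?thesis
    proof (cases "p = \<infinity>")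
      case True
      then have g_le: "\<And>x. x \<in> space M \<Longrightarrow> \<bar>g x\<bar> \<le> sqrt (cs k * D)" and "c = 1"
        using H \<open>k \<in> {1..m}\<close> p_ne_1 by (auto simp: cond_H_def g_def D_def)
      have "(g x)\<^sup>2 \<le> cs k * D" if "x \<in> space M" for x
        using power_mono[OF g_le[OF that], of 2] \<open>0 < cs k\<close> \<open>0 < D\<close> by simp
      moreover have "(\<integral>\<^sup>+x. ennreal (f x) \<partial>M) = 1"
        using prob_space.emeasure_space_1[OF \<open>prob_space (density M (\<lambda>x. ennreal (f x)))\<close>]
        by (simp add: emeasure_density)
      ultimately show ?thesis
        using nn_integral_mult_le_bounded_factor[where w = f and u = "\<lambda>x. (g x)\<^sup>2" and A = "cs k * D"] f_nonneg
          \<open>0 < cs k\<close> \<open>0 < D\<close> \<open>c = 1\<close>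
        by simp
    next
      case False
      then obtain p' where "p = ereal p'" and "1 < p'"
        using H p_ne_1 by (cases p) (auto simp: cond_H_def)
      then show ?thesis
        using H \<open>k \<in> {1..m}\<close> p_ne_1 False f_nonneg \<open>0 < cs k\<close> \<open>0 < D\<close> \<open>0 < c\<close>
          nn_integral_mult_square_le_Holder[where p = p' and w = f and g = g and A = "cs k * D" and B = c]
        by (auto simp: cond_H_def g_def D_def Let_def mult_ac)
    qed
  qed
  finally show ?thesis
    by (simp add: g_def D_def)
qed

section \<open>Union bound over the regions\<close>

lemma (in prob_space) prob_Collect_Ball_ge:
  assumes "finite I"
    and "\<And>k. k \<in> I \<Longrightarrow> {\<omega>\<in>space M. \<not> P k \<omega>} \<in> events"
    and "\<And>k. k \<in> I \<Longrightarrow> prob {\<omega>\<in>space M. \<not> P k \<omega>} \<le> \<delta>"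
  shows "prob {\<omega>\<in>space M. \<forall>k\<in>I. P k \<omega>} \<ge> 1 - real (card I) * \<delta>"
proof -
  let ?B = "\<Union>k\<in>I. {\<omega>\<in>space M. \<not> P k \<omega>}"
  have "?B \<in> events"
    using assms(1,2) by (intro sets.finite_UN) auto
  moreover have "{\<omega>\<in>space M. \<forall>k\<in>I. P k \<omega>} = space M - ?B"
    by auto
  ultimately have "prob {\<omega>\<in>space M. \<forall>k\<in>I. P k \<omega>} = 1 - prob ?B"
    by (simp add: prob_compl)
  moreover have "prob ?B \<le> (\<Sum>k\<in>I. prob {\<omega>\<in>space M. \<not> P k \<omega>})"
    using assms(1,2) by (intro measure_UNION_le) auto
  moreover have "\<dots> \<le> real (card I) * \<delta>"
    using assms(3) by (rule sum_bounded_above)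
  ultimately show ?thesis
    by linarith
qed

lemma prob_not_mem_CR_le:
  fixes M :: "'a measure" and f :: "'a \<Rightarrow> real"
  defines "P \<equiv> density M (\<lambda>x. ennreal (f x))"
  assumes [measurable]: "f \<in> borel_measurable M" and f_nonneg: "\<And>x. x \<in> space M \<Longrightarrow> f x \<ge> 0"
    and "prob_space P" and "f \<in> L2 M" and "N \<ge> 1"
    and "fs k \<in> L2 M" and "Dnorm M (fs k) > 0" and H: "cond_H M f m fs p c cs" and k: "k \<in> {1..m}"
    and "0 < \<epsilon>" and "\<epsilon> < 1"
  shows "{\<omega>\<in>space (PiM {1..N} (\<lambda>_. P)). f \<notin> CR M N m (fs k) (cs k) c \<epsilon> \<omega>} \<in> sets (PiM {1..N} (\<lambda>_. P))"
    and "measure (PiM {1..N} (\<lambda>_. P)) {\<omega>\<in>space (PiM {1..N} (\<lambda>_. P)). f \<notin> CR M N m (fs k) (cs k) c \<epsilon> \<omega>}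
      \<le> \<epsilon> / real m"
proof -
  interpret P: prob_space P
    by (rule \<open>prob_space P\<close>)
  define L where "L = ln (2 * real m / \<epsilon>)"
  have "0 \<le> L" and exp_L: "2 * exp (- L) = \<epsilon> / real m"
    using k \<open>0 < \<epsilon>\<close> \<open>\<epsilon> < 1\<close> by (auto simp: L_def exp_minus field_simps)
  have [measurable]: "fs k \<in> borel_measurable M" "fs k \<in> borel_measurable P"
    using \<open>fs k \<in> L2 M\<close> by (simp_all add: L2_def P_def)
  have "P.expectation (fs k) = (\<integral>x. f x * fs k x \<partial>M)"
    unfolding P_def using f_nonneg by (subst integral_density) (auto intro: AE_I2)
  then have CR_fails: "{\<omega>\<in>space (PiM {1..N} (\<lambda>_. P)). f \<notin> CR M N m (fs k) (cs k) c \<epsilon> \<omega>}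
      = {\<omega>\<in>space (PiM {1..N} (\<lambda>_. P)). 4 * (1 + L) * ((\<Sum>i\<in>{1..N}. (fs k (\<omega> i))\<^sup>2)
           + real (card {1..N}) * (cs k * c * Dnorm M (fs k))) < (\<Sum>i\<in>{1..N}. fs k (\<omega> i) - P.expectation (fs k))\<^sup>2}"
    using mem_CR_iff[OF \<open>f \<in> L2 M\<close> \<open>fs k \<in> L2 M\<close> \<open>Dnorm M (fs k) > 0\<close> \<open>N \<ge> 1\<close>]
    by (auto simp: L_def not_le)
  then show "{\<omega>\<in>space (PiM {1..N} (\<lambda>_. P)). f \<notin> CR M N m (fs k) (cs k) c \<epsilon> \<omega>} \<in> sets (PiM {1..N} (\<lambda>_. P))"
    by simp
  have "(\<integral>\<^sup>+x. ennreal ((fs k x)\<^sup>2) \<partial>P) \<le> ennreal (cs k * c * Dnorm M (fs k))"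
    unfolding P_def using \<open>prob_space P\<close> assms(7,8) H k f_nonneg
    by (intro nn_integral_density_square_le) (auto simp: P_def)
  moreover have "0 < cs k * c * Dnorm M (fs k)"
    using H k \<open>Dnorm M (fs k) > 0\<close> by (auto simp: cond_H_def)
  ultimately have "measure (PiM {1..N} (\<lambda>_. P)) {\<omega>\<in>space (PiM {1..N} (\<lambda>_. P)). f \<notin> CR M N m (fs k) (cs k) c \<epsilon> \<omega>}
      \<le> 2 * exp (- L)"
    unfolding CR_fails using \<open>0 \<le> L\<close> \<open>N \<ge> 1\<close>
    by (intro P.prob_iid_self_normalized_deviation) auto
  then show "measure (PiM {1..N} (\<lambda>_. P)) {\<omega>\<in>space (PiM {1..N} (\<lambda>_. P)). f \<notin> CR M N m (fs k) (cs k) c \<epsilon> \<omega>}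
      \<le> \<epsilon> / real m"
    using exp_L by simp
qed

theorem corollary1:
  fixes M :: "'a measure" and f :: "'a \<Rightarrow> real" and fs :: "nat \<Rightarrow> 'a \<Rightarrow> real"
    and m N :: nat and p :: ereal and c :: real and cs :: "nat \<Rightarrow> real" and \<epsilon> :: real
  assumes "sigma_finite_measure M"
    and "f \<in> borel_measurable M" and "\<And>x. x \<in> space M \<Longrightarrow> f x \<ge> 0"
    and "prob_space (density M (\<lambda>x. ennreal (f x)))"
    and "f \<in> L2 M"
    and "N \<ge> 1"
    and "\<And>k. k \<in> {1..m} \<Longrightarrow> fs k \<in> L2 M"
    and "\<And>k. k \<in> {1..m} \<Longrightarrow> Dnorm M (fs k) > 0"
    and "cond_H M f m fs p c cs"
    and "\<epsilon> > 0"
  shows "measure (PiM {1..N} (\<lambda>_. density M (\<lambda>x. ennreal (f x))))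
           {\<omega> \<in> space (PiM {1..N} (\<lambda>_. density M (\<lambda>x. ennreal (f x)))).
              \<forall>k\<in>{1..m}. f \<in> CR M N m (fs k) (cs k) c \<epsilon> \<omega>}
         \<ge> 1 - \<epsilon>"
proof (cases "\<epsilon> < 1")
  case True
  interpret Pi: prob_space "PiM {1..N} (\<lambda>_. density M (\<lambda>x. ennreal (f x)))"
    by (rule prob_space_PiM) (rule assms(4))
  have "Pi.prob {\<omega>\<in>space (PiM {1..N} (\<lambda>_. density M (\<lambda>x. ennreal (f x)))).
          \<forall>k\<in>{1..m}. f \<in> CR M N m (fs k) (cs k) c \<epsilon> \<omega>}
      \<ge> 1 - real (card {1..m}) * (\<epsilon> / real m)"
    using prob_not_mem_CR_le[OF assms(2-6) assms(7,8) assms(9) _ assms(10) True]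
    by (intro Pi.prob_Collect_Ball_ge) auto
  moreover have "real (card {1..m}) * (\<epsilon> / real m) \<le> \<epsilon>"
    using assms(10) by (cases "m = 0") auto
  ultimately show ?thesis
    by linarith
next
  case False
  then show ?thesis
    by (intro order_trans[OF _ measure_nonneg]) simp
qed

end
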